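(* Assume $\mathbf{P.0}$ has an optimal solution, with optimal value $OPT$. Then $\mathbf{P.2}$ has a feasible solution, and an optimal solution $A^{P2}$ of $\mathbf{P.2}$ satisfies $f(A^{P2})\ge (1-1/e)^2\, OPT$. In particular, there exists a set $A\subseteq V$ with $|A|\le b$, $\lfloor\alpha_t\rfloor\le|A\cap V_t|\le\lceil\beta_t\rceil$ for all $t\in[m]$, and $f(A)\ge(1-1/e)^2\,OPT$.
   Context: Let $V$ be a finite set of $n$ items and $f:2^V\to\mathbb{R}_{\ge 0}$ a non-negative monotone submodular function. Items are divided into pairwise disjoint groups $V_1,\dots,V_m$ with $V=V_1\cup\dots\cup V_m$; $\alpha,\beta\in\mathbb{R}_{\ge 0}^m$ and $b$ is a positive integer. Let $\mathcal{F}=\{S\subseteq V: |S|\le b\}$. Problem $\mathbf{P.0}$: maximize $\sum_{S\in\mathcal{F}} x_S f(S)$ over $x\in[0,1]^{\mathcal{F}}$ subject to $\alpha_t\le \sum_{S\in\mathcal{F}} x_S |S\cap V_t|\le \beta_t$ for all $t\in[m]$ and $\sum_{S\in\mathcal{F}}x_S\le 1$; $OPT$ denotes its optimal value. Problem $\mathbf{P.2}$: maximize $f(S)$ over $S\in\mathcal{F}$ subject to $\lfloor\alpha_t\rfloor\le|S\cap V_t|\le\lceil\beta_t\rceil$ for all $t\in[m]$. *)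

theory Defs
  imports Complex_Main
begin

definition monotone_set_fun :: "'a set \<Rightarrow> ('a set \<Rightarrow> real) \<Rightarrow> bool" where
  "monotone_set_fun V f \<longleftrightarrow> (\<forall>A B. A \<subseteq> B \<and> B \<subseteq> V \<longrightarrow> f A \<le> f B)"

definition submodular :: "'a set \<Rightarrow> ('a set \<Rightarrow> real) \<Rightarrow> bool" where
  "submodular V f \<longleftrightarrow>
     (\<forall>A B. A \<subseteq> V \<and> B \<subseteq> V \<longrightarrow> f (A \<union> B) + f (A \<inter> B) \<le> f A + f B)"

definition fam :: "'a set \<Rightarrow> nat \<Rightarrow> 'a set set" where
  "fam V b = {S. S \<subseteq> V \<and> card S \<le> b}"

text \<open>Feasibility for problem P.0: x is a vector indexed by F (values outside F irrelevant),
  groups are G 0, ..., G (m-1).\<close>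
definition P0_feasible ::
  "'a set \<Rightarrow> nat \<Rightarrow> (nat \<Rightarrow> 'a set) \<Rightarrow> (nat \<Rightarrow> real) \<Rightarrow> (nat \<Rightarrow> real) \<Rightarrow> nat
    \<Rightarrow> ('a set \<Rightarrow> real) \<Rightarrow> bool" where
  "P0_feasible V m G \<alpha> \<beta> b x \<longleftrightarrow>
     (\<forall>S\<in>fam V b. 0 \<le> x S \<and> x S \<le> 1) \<and>
     (\<forall>t<m. \<alpha> t \<le> (\<Sum>S\<in>fam V b. x S * real (card (S \<inter> G t))) \<and>
            (\<Sum>S\<in>fam V b. x S * real (card (S \<inter> G t))) \<le> \<beta> t) \<and>
     (\<Sum>S\<in>fam V b. x S) \<le> 1"

definition P0_value :: "'a set \<Rightarrow> nat \<Rightarrow> ('a set \<Rightarrow> real) \<Rightarrow> ('a set \<Rightarrow> real) \<Rightarrow> real" where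
  "P0_value V b f x = (\<Sum>S\<in>fam V b. x S * f S)"

definition P0_optimal ::
  "'a set \<Rightarrow> nat \<Rightarrow> (nat \<Rightarrow> 'a set) \<Rightarrow> (nat \<Rightarrow> real) \<Rightarrow> (nat \<Rightarrow> real) \<Rightarrow> nat
    \<Rightarrow> ('a set \<Rightarrow> real) \<Rightarrow> ('a set \<Rightarrow> real) \<Rightarrow> bool" where
  "P0_optimal V m G \<alpha> \<beta> b f x \<longleftrightarrow>
     P0_feasible V m G \<alpha> \<beta> b x \<and>
     (\<forall>y. P0_feasible V m G \<alpha> \<beta> b y \<longrightarrow> P0_value V b f y \<le> P0_value V b f x)"

definition P2_feasible ::
  "'a set \<Rightarrow> nat \<Rightarrow> (nat \<Rightarrow> 'a set) \<Rightarrow> (nat \<Rightarrow> real) \<Rightarrow> (nat \<Rightarrow> real) \<Rightarrow> nat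
    \<Rightarrow> 'a set \<Rightarrow> bool" where
  "P2_feasible V m G \<alpha> \<beta> b S \<longleftrightarrow>
     S \<in> fam V b \<and>
     (\<forall>t<m. \<lfloor>\<alpha> t\<rfloor> \<le> int (card (S \<inter> G t)) \<and> int (card (S \<inter> G t)) \<le> \<lceil>\<beta> t\<rceil>)"

definition P2_optimal ::
  "'a set \<Rightarrow> nat \<Rightarrow> (nat \<Rightarrow> 'a set) \<Rightarrow> (nat \<Rightarrow> real) \<Rightarrow> (nat \<Rightarrow> real) \<Rightarrow> nat
    \<Rightarrow> ('a set \<Rightarrow> real) \<Rightarrow> 'a set \<Rightarrow> bool" where
  "P2_optimal V m G \<alpha> \<beta> b f S \<longleftrightarrow>
     P2_feasible V m G \<alpha> \<beta> b S \<and>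
     (\<forall>T. P2_feasible V m G \<alpha> \<beta> b T \<longrightarrow> f T \<le> f S)"

end

theory Submission
  imports Defs
begin

text \<open>Run the greedy algorithm on the family of sets that can still be completed to a
  P.2-feasible set. For a feasible solution x of P.0, the coverage z u = \<Sum>{x S | u \<in> S}
  meets the group quotas fractionally, so the z-weight of the elements that cannot be added
  to a set H of the family is at most |H|. Charging every element to the greedy gain of the
  step at which it became blocked, and summing by parts against the decreasing gains, gives
  \<Sum>u z u (f (G + u) - f G) \<le> f G for the greedy set G. Submodularity turns this into
  OPT \<le> 2 f G, and any completion A of G satisfies f A \<ge> OPT / 2 \<ge> (1 - 1/e)^2 OPT.\<close>

lemma monotone_set_funD: "monotone_set_fun V f \<Longrightarrow> A \<subseteq> B \<Longrightarrow> B \<subseteq> V \<Longrightarrow> f A \<le> f B"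
  unfolding monotone_set_fun_def by blast

lemma submodular_diminishing_returns:
  assumes mono: "monotone_set_fun V f" and sub: "submodular V f"
    and "A \<subseteq> B" "B \<subseteq> V" "u \<in> V"
  shows "f (insert u B) - f B \<le> f (insert u A) - f A"
proof (cases "u \<in> B")
  case True
  then have "insert u B = B" by blast
  moreover have "f A \<le> f (insert u A)"
    by (rule monotone_set_funD[OF mono]) (use assms(3-5) in auto)
  ultimately show ?thesis by simp
next
  case False
  have "insert u A \<union> B = insert u B" "insert u A \<inter> B = A" "insert u A \<subseteq> V"
    using assms(3-5) False by blast+
  then have "f (insert u B) + f A \<le> f (insert u A) + f B"
    using sub \<open>B \<subseteq> V\<close> unfolding submodular_def by metis
  then show ?thesis by simp
qed

lemma submodular_le_add_marginals:
  assumes mono: "monotone_set_fun V f" and sub: "submodular V f"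
    and "A \<subseteq> V" "S \<subseteq> V" "finite S"
  shows "f (A \<union> S) \<le> f A + (\<Sum>u\<in>S - A. f (insert u A) - f A)"
  using \<open>finite S\<close> \<open>S \<subseteq> V\<close>
proof (induction S rule: finite_induct)
  case empty
  then show ?case by simp
next
  case (insert a S)
  then have IH: "f (A \<union> S) \<le> f A + (\<Sum>u\<in>S - A. f (insert u A) - f A)" by simp
  show ?case
  proof (cases "a \<in> A")
    case True
    then have "A \<union> insert a S = A \<union> S" "insert a S - A = S - A" by auto
    then show ?thesis using IH by simp
  next
    case False
    have "f (insert a (A \<union> S)) - f (A \<union> S) \<le> f (insert a A) - f A"
      using submodular_diminishing_returns[OF mono sub, of A "A \<union> S" a] \<open>A \<subseteq> V\<close> insert.prems
      by simp
    moreover have "insert a S - A = insert a (S - A)" using False by blast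
    ultimately show ?thesis using IH insert.hyps by simp
  qed
qed

lemma sum_mult_le_sum_if_partial_sums_le:
  fixes w g :: "nat \<Rightarrow> real"
  assumes "\<And>i j. i \<le> j \<Longrightarrow> j < r \<Longrightarrow> g j \<le> g i"
    and "\<And>i. i < r \<Longrightarrow> 0 \<le> g i"
    and "\<And>i. i < r \<Longrightarrow> (\<Sum>k\<le>i. w k) \<le> real (Suc i)"
  shows "(\<Sum>i<r. w i * g i) \<le> (\<Sum>i<r. g i)"
  using assms
proof (induction r arbitrary: g)
  case 0
  then show ?case by simp
next
  case (Suc r)
  \<comment> \<open>Subtract the smallest value g r from g and apply the induction hypothesis to the rest.\<close>
  define c where "c = g r"
  have IH: "(\<Sum>i<r. w i * (g i - c)) \<le> (\<Sum>i<r. g i - c)"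
    by (rule Suc.IH) (use Suc.prems in \<open>auto simp: c_def\<close>)
  have "c * (\<Sum>i<Suc r. w i) \<le> c * real (Suc r)"
    using Suc.prems(2,3)[of r] by (simp add: c_def lessThan_Suc_atMost mult_left_mono)
  moreover have "(\<Sum>i<Suc r. w i * g i) = (\<Sum>i<r. w i * (g i - c)) + c * (\<Sum>i<Suc r. w i)"
    by (simp add: c_def algebra_simps sum_distrib_left sum.distrib sum_subtractf)
  moreover have "(\<Sum>i<Suc r. g i) = (\<Sum>i<r. g i - c) + c * real (Suc r)"
    by (simp add: c_def sum_subtractf algebra_simps)
  ultimately show ?case using IH by linarith
qed

definition greedy_list :: "'a set \<Rightarrow> 'a set set \<Rightarrow> ('a set \<Rightarrow> real) \<Rightarrow> 'a list \<Rightarrow> bool" where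
  "greedy_list V M f vs \<longleftrightarrow> distinct vs \<and> set vs \<subseteq> V \<and>
     (\<forall>i<length vs. set (take (Suc i) vs) \<in> M \<and>
        (\<forall>u\<in>V - set (take i vs). insert u (set (take i vs)) \<in> M \<longrightarrow>
           f (insert u (set (take i vs))) \<le> f (set (take (Suc i) vs))))"

lemma greedy_list_snoc:
  assumes "greedy_list V M f vs" "u \<in> V - set vs" "insert u (set vs) \<in> M"
    and "\<And>v. v \<in> V - set vs \<Longrightarrow> insert v (set vs) \<in> M \<Longrightarrow> f (insert v (set vs)) \<le> f (insert u (set vs))"
  shows "greedy_list V M f (vs @ [u])"
  unfolding greedy_list_def
proof (intro conjI allI impI ballI)
  show "distinct (vs @ [u])" "set (vs @ [u]) \<subseteq> V"
    using assms(1,2) unfolding greedy_list_def by auto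
next
  fix i assume i: "i < length (vs @ [u])"
  show "set (take (Suc i) (vs @ [u])) \<in> M"
  proof (cases "i < length vs")
    case True
    then show ?thesis using assms(1) unfolding greedy_list_def by simp
  next
    case False
    then show ?thesis using i assms(3) by simp
  qed
  fix v assume v: "v \<in> V - set (take i (vs @ [u]))" "insert v (set (take i (vs @ [u]))) \<in> M"
  show "f (insert v (set (take i (vs @ [u])))) \<le> f (set (take (Suc i) (vs @ [u])))"
  proof (cases "i < length vs")
    case True
    then show ?thesis using assms(1) v unfolding greedy_list_def by simp
  next
    case False
    then have "i = length vs" using i by simp
    then show ?thesis using assms(4) v by simp
  qed
qed

lemma maximal_greedy_list_exists:
  assumes "finite V" "{} \<in> M"
  shows "\<exists>vs. greedy_list V M f vs \<and> set vs \<in> M \<and> (\<forall>u\<in>V - set vs. insert u (set vs) \<notin> M)"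
proof -
  have "length vs < Suc (card V)" if "greedy_list V M f vs" for vs
  proof -
    have "length vs = card (set vs)" using that by (simp add: greedy_list_def distinct_card)
    also have "\<dots> \<le> card V" using that \<open>finite V\<close> by (simp add: greedy_list_def card_mono)
    finally show ?thesis by simp
  qed
  moreover have "greedy_list V M f []" by (simp add: greedy_list_def)
  ultimately obtain vs where vs: "greedy_list V M f vs"
    and longest: "\<And>ws. greedy_list V M f ws \<Longrightarrow> length ws \<le> length vs"
    using ex_has_greatest_nat[of "greedy_list V M f" "[]" length] by blast
  have "set vs \<in> M"
  proof (cases vs rule: rev_cases)
    case Nil
    then show ?thesis using \<open>{} \<in> M\<close> by simp
  next
    case (snoc ws v)
    then have "length ws < length vs" "take (Suc (length ws)) vs = vs" by simp_all
    then show ?thesis using vs unfolding greedy_list_def by metis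
  qed
  moreover have "insert u (set vs) \<notin> M" if "u \<in> V - set vs" for u
  proof
    assume "insert u (set vs) \<in> M"
    define C where "C = {v \<in> V - set vs. insert v (set vs) \<in> M}"
    let ?value = "\<lambda>v. f (insert v (set vs))"
    have "finite C" "u \<in> C"
      using \<open>finite V\<close> that \<open>insert u (set vs) \<in> M\<close> unfolding C_def by auto
    then obtain v where "v \<in> C" "?value v = Max (?value ` C)"
      using Max_in[of "?value ` C"] by fastforce
    then have "greedy_list V M f (vs @ [v])"
      using greedy_list_snoc[OF vs] \<open>finite C\<close> unfolding C_def by (simp add: Max_ge)
    then show False using longest[of "vs @ [v]"] by simp
  qed
  ultimately show ?thesis using vs by blast
qed

definition blocked :: "'a set \<Rightarrow> 'a set set \<Rightarrow> 'a set \<Rightarrow> 'a set" where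
  "blocked V M H = {u \<in> V - H. insert u H \<notin> M}"

locale greedy_run =
  fixes V :: "'a set" and M :: "'a set set" and f :: "'a set \<Rightarrow> real" and vs :: "'a list"
  assumes finite_ground: "finite V"
    and empty_in: "{} \<in> M"
    and subset_closed: "\<And>A B. A \<subseteq> B \<Longrightarrow> B \<in> M \<Longrightarrow> A \<in> M"
    and monotone: "monotone_set_fun V f"
    and submod: "submodular V f"
    and greedy: "greedy_list V M f vs"
    and maximal: "\<And>u. u \<in> V - set vs \<Longrightarrow> insert u (set vs) \<notin> M"
begin

definition prefix :: "nat \<Rightarrow> 'a set" where
  "prefix i = set (take i vs)"

definition gain :: "nat \<Rightarrow> real" where
  "gain i = f (prefix (Suc i)) - f (prefix i)"

definition block_index :: "'a \<Rightarrow> nat" where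
  "block_index u = (LEAST i. insert u (prefix i) \<notin> M)"

lemma diminishing_returns:
  "A \<subseteq> B \<Longrightarrow> B \<subseteq> V \<Longrightarrow> u \<in> V \<Longrightarrow> f (insert u B) - f B \<le> f (insert u A) - f A"
  by (rule submodular_diminishing_returns[OF monotone submod])

lemma set_subset_ground: "set vs \<subseteq> V"
  using greedy by (simp add: greedy_list_def)

lemma prefix_mono: "i \<le> j \<Longrightarrow> prefix i \<subseteq> prefix j"
  by (simp add: prefix_def set_take_subset_set_take)

lemma prefix_subset_set: "prefix i \<subseteq> set vs"
  by (simp add: prefix_def set_take_subset)

lemma prefix_subset_ground: "prefix i \<subseteq> V"
  using prefix_subset_set set_subset_ground by blast

lemma prefix_0 [simp]: "prefix 0 = {}" and prefix_length [simp]: "prefix (length vs) = set vs"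
  by (simp_all add: prefix_def)

lemma prefix_Suc: "i < length vs \<Longrightarrow> prefix (Suc i) = insert (vs ! i) (prefix i)"
  by (simp add: prefix_def take_Suc_conv_app_nth)

lemma card_prefix: "i \<le> length vs \<Longrightarrow> card (prefix i) = i"
  using greedy by (simp add: prefix_def greedy_list_def distinct_card)

lemma nth_notin_prefix:
  assumes "i \<le> j" "j < length vs"
  shows "vs ! j \<notin> prefix i"
proof -
  have "distinct (take (Suc j) vs)" using greedy by (simp add: greedy_list_def)
  then have "vs ! j \<notin> prefix j" using assms(2) by (simp add: prefix_def take_Suc_conv_app_nth)
  then show ?thesis using prefix_mono[OF assms(1)] by blast
qed

lemma prefix_in: "i \<le> length vs \<Longrightarrow> prefix i \<in> M"
  using greedy empty_in unfolding greedy_list_def prefix_def by (cases i) auto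

lemma gain_ge:
  assumes "i < length vs" "u \<in> V - prefix i" "insert u (prefix i) \<in> M"
  shows "f (insert u (prefix i)) - f (prefix i) \<le> gain i"
  using greedy assms unfolding greedy_list_def gain_def prefix_def by simp

lemma gain_nonneg: "0 \<le> gain i"
  unfolding gain_def using monotone_set_funD[OF monotone prefix_mono prefix_subset_ground, of i "Suc i"] by simp

lemma gain_antimono:
  assumes "i \<le> j" "j < length vs"
  shows "gain j \<le> gain i"
proof -
  have "gain j = f (insert (vs ! j) (prefix j)) - f (prefix j)"
    using prefix_Suc[OF assms(2)] by (simp add: gain_def)
  also have "\<dots> \<le> f (insert (vs ! j) (prefix i)) - f (prefix i)"
    using diminishing_returns[OF prefix_mono[OF assms(1)] prefix_subset_ground]
      nth_mem[OF assms(2)] set_subset_ground by blast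
  also have "\<dots> \<le> gain i"
  proof (rule gain_ge)
    have "insert (vs ! j) (prefix i) \<subseteq> prefix (Suc j)"
      using prefix_Suc[OF assms(2)] prefix_mono[OF assms(1)] by blast
    then show "insert (vs ! j) (prefix i) \<in> M"
      using subset_closed prefix_in[of "Suc j"] assms(2) by auto
    show "vs ! j \<in> V - prefix i"
      using nth_notin_prefix[OF assms] set_subset_ground assms(2) by auto
  qed (use assms in simp)
  finally show ?thesis .
qed

lemma sum_gain: "(\<Sum>i<length vs. gain i) = f (set vs) - f {}"
  unfolding gain_def using sum_lessThan_telescope[of "\<lambda>i. f (prefix i)"] by simp

lemma block_index_le: "u \<in> V - set vs \<Longrightarrow> block_index u \<le> length vs"
  unfolding block_index_def by (rule Least_le) (simp add: maximal)

lemma blocked_at_block_index: "u \<in> V - set vs \<Longrightarrow> insert u (prefix (block_index u)) \<notin> M"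
  unfolding block_index_def by (rule LeastI[of _ "length vs"]) (simp add: maximal)

lemma in_before_block_index: "i < block_index u \<Longrightarrow> insert u (prefix i) \<in> M"
  unfolding block_index_def using not_less_Least by blast

lemma marginal_le_gain_before_block:
  assumes "u \<in> V - set vs" "block_index u = Suc k"
  shows "f (insert u (set vs)) - f (set vs) \<le> gain k"
proof -
  have "k < length vs" using block_index_le[OF assms(1)] assms(2) by simp
  have "f (insert u (set vs)) - f (set vs) \<le> f (insert u (prefix k)) - f (prefix k)"
    using diminishing_returns[OF prefix_subset_set set_subset_ground] assms(1) by blast
  also have "\<dots> \<le> gain k"
    using gain_ge[OF \<open>k < length vs\<close>] in_before_block_index[of k u] assms prefix_subset_set by auto
  finally show ?thesis .
qed

lemma early_blocked_weight_le:
  assumes blocked_weight: "\<And>H. H \<in> M \<Longrightarrow> (\<Sum>u\<in>blocked V M H. z u) \<le> real (card H)"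
    and z_nonneg: "\<And>u. u \<in> V \<Longrightarrow> 0 \<le> z u"
    and "i < length vs"
  shows "(\<Sum>u | u \<in> V - set vs \<and> block_index u \<le> Suc i. z u) \<le> real (Suc i)"
proof -
  have "{u. u \<in> V - set vs \<and> block_index u \<le> Suc i} \<subseteq> blocked V M (prefix (Suc i))"
  proof safe
    fix u assume u: "u \<in> V" "u \<notin> set vs" "block_index u \<le> Suc i"
    have "insert u (prefix (block_index u)) \<subseteq> insert u (prefix (Suc i))"
      using prefix_mono[OF u(3)] by blast
    then have "insert u (prefix (Suc i)) \<notin> M"
      using subset_closed blocked_at_block_index u(1,2) by blast
    then show "u \<in> blocked V M (prefix (Suc i))"
      using u(1,2) prefix_subset_set unfolding blocked_def by blast
  qed
  then have "(\<Sum>u | u \<in> V - set vs \<and> block_index u \<le> Suc i. z u) \<le> (\<Sum>u\<in>blocked V M (prefix (Suc i)). z u)"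
    by (intro sum_mono2) (use finite_ground z_nonneg in \<open>auto simp: blocked_def\<close>)
  also have "\<dots> \<le> real (card (prefix (Suc i)))"
    using blocked_weight prefix_in \<open>i < length vs\<close> by simp
  also have "\<dots> = real (Suc i)"
    using card_prefix \<open>i < length vs\<close> by simp
  finally show ?thesis .
qed

text \<open>An element u outside the greedy set is charged to gain k, where block_index u = Suc k;
  the blocking hypothesis bounds the partial sums of the charges, so summation by parts against
  the decreasing gains applies.\<close>

lemma sum_weighted_marginals_le:
  assumes blocked_weight: "\<And>H. H \<in> M \<Longrightarrow> (\<Sum>u\<in>blocked V M H. z u) \<le> real (card H)"
    and z_nonneg: "\<And>u. u \<in> V \<Longrightarrow> 0 \<le> z u"
  shows "(\<Sum>u\<in>V - set vs. z u * (f (insert u (set vs)) - f (set vs))) \<le> f (set vs) - f {}"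
proof -
  let ?r = "length vs"
  define w where "w k = (\<Sum>u\<in>V - set vs. if block_index u = Suc k then z u else 0)" for k
  have pointwise: "z u * (f (insert u (set vs)) - f (set vs))
      \<le> (\<Sum>k<?r. if block_index u = Suc k then z u * gain k else 0)" if u: "u \<in> V - set vs" for u
  proof (cases "block_index u")
    case 0
    then have "u \<in> blocked V M {}"
      using blocked_at_block_index[OF u] u unfolding blocked_def by simp
    then have "z u \<le> (\<Sum>v\<in>blocked V M {}. z v)"
      by (intro member_le_sum) (use finite_ground z_nonneg in \<open>auto simp: blocked_def\<close>)
    also have "\<dots> \<le> 0" using blocked_weight[OF empty_in] by simp
    finally have "z u = 0" using z_nonneg u by force
    then show ?thesis using 0 by simp
  next
    case (Suc k)
    then have "k < ?r" using block_index_le[OF u] by simp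
    then show ?thesis
      using Suc marginal_le_gain_before_block[OF u Suc] z_nonneg u by (simp add: mult_left_mono)
  qed
  have partial_sums: "(\<Sum>k\<le>i. w k) \<le> real (Suc i)" if "i < ?r" for i
  proof -
    have inner: "(\<Sum>k\<le>i. if block_index u = Suc k then z u else 0)
        = (if 0 < block_index u \<and> block_index u \<le> Suc i then z u else 0)" for u
      by (cases "block_index u") auto
    have "(\<Sum>k\<le>i. w k) = (\<Sum>u\<in>V - set vs. if 0 < block_index u \<and> block_index u \<le> Suc i then z u else 0)"
      unfolding w_def by (subst sum.swap) (simp only: inner)
    also have "\<dots> = (\<Sum>u | u \<in> V - set vs \<and> 0 < block_index u \<and> block_index u \<le> Suc i. z u)"
      by (subst sum.inter_filter[symmetric]) (simp_all add: finite_ground conj_commute)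
    also have "\<dots> \<le> (\<Sum>u | u \<in> V - set vs \<and> block_index u \<le> Suc i. z u)"
      by (intro sum_mono2) (use finite_ground z_nonneg in auto)
    also have "\<dots> \<le> real (Suc i)"
      by (rule early_blocked_weight_le[OF blocked_weight z_nonneg that])
    finally show ?thesis .
  qed
  have "(\<Sum>u\<in>V - set vs. z u * (f (insert u (set vs)) - f (set vs)))
      \<le> (\<Sum>u\<in>V - set vs. \<Sum>k<?r. if block_index u = Suc k then z u * gain k else 0)"
    by (rule sum_mono) (rule pointwise)
  also have "\<dots> = (\<Sum>k<?r. w k * gain k)"
    unfolding w_def sum_distrib_right by (subst sum.swap) (auto intro!: sum.cong)
  also have "\<dots> \<le> (\<Sum>k<?r. gain k)"
    by (rule sum_mult_le_sum_if_partial_sums_le) (use gain_antimono gain_nonneg partial_sums in auto)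
  also have "\<dots> = f (set vs) - f {}"
    by (rule sum_gain)
  finally show ?thesis .
qed

end

definition coverage :: "'a set set \<Rightarrow> ('a set \<Rightarrow> real) \<Rightarrow> 'a \<Rightarrow> real" where
  "coverage F x u = (\<Sum>S\<in>F. if u \<in> S then x S else 0)"

lemma coverage_nonneg: "(\<And>S. S \<in> F \<Longrightarrow> 0 \<le> x S) \<Longrightarrow> 0 \<le> coverage F x u"
  unfolding coverage_def by (auto intro: sum_nonneg)

lemma coverage_le_sum: "(\<And>S. S \<in> F \<Longrightarrow> 0 \<le> x S) \<Longrightarrow> coverage F x u \<le> sum x F"
  unfolding coverage_def by (intro sum_mono) auto

lemma sum_coverage:
  assumes "finite A"
  shows "(\<Sum>u\<in>A. coverage F x u) = (\<Sum>S\<in>F. x S * real (card (S \<inter> A)))"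
proof -
  have "(\<Sum>u\<in>A. if u \<in> S then x S else 0) = x S * real (card (S \<inter> A))" for S
    using assms by (simp add: sum.If_cases Int_commute)
  then show ?thesis unfolding coverage_def by (subst sum.swap) simp
qed

lemma sum_mult_le_add_coverage_marginals:
  assumes mono: "monotone_set_fun V f" and submod: "submodular V f"
    and "finite V" "F \<subseteq> Pow V" "\<And>S. S \<in> F \<Longrightarrow> 0 \<le> x S" "A \<subseteq> V"
  shows "(\<Sum>S\<in>F. x S * f S)
    \<le> (\<Sum>S\<in>F. x S) * f A + (\<Sum>u\<in>V - A. coverage F x u * (f (insert u A) - f A))"
proof -
  let ?marg = "\<lambda>u. f (insert u A) - f A"
  have value_le: "f S \<le> f A + (\<Sum>u\<in>V - A. if u \<in> S then ?marg u else 0)" if "S \<in> F" for S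
  proof -
    have S: "S \<subseteq> V" "finite S" using that assms(3,4) finite_subset by blast+
    have "f S \<le> f (A \<union> S)"
      by (rule monotone_set_funD[OF mono]) (use S(1) assms(6) in auto)
    also have "\<dots> \<le> f A + (\<Sum>u\<in>S - A. ?marg u)"
      by (rule submodular_le_add_marginals[OF mono submod assms(6) S])
    also have "S - A = {u \<in> V - A. u \<in> S}" using S(1) by blast
    also have "(\<Sum>u\<in>{u \<in> V - A. u \<in> S}. ?marg u) = (\<Sum>u\<in>V - A. if u \<in> S then ?marg u else 0)"
      using assms(3) by (intro sum.inter_filter) simp
    finally show ?thesis .
  qed
  have "(\<Sum>S\<in>F. x S * f S) \<le> (\<Sum>S\<in>F. x S * (f A + (\<Sum>u\<in>V - A. if u \<in> S then ?marg u else 0)))"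
    by (intro sum_mono mult_left_mono value_le assms(5))
  also have "\<dots> = (\<Sum>S\<in>F. x S) * f A + (\<Sum>u\<in>V - A. coverage F x u * ?marg u)"
    unfolding coverage_def distrib_left sum.distrib sum_distrib_right sum_distrib_left
    by (subst (2) sum.swap) (auto intro!: sum.cong)
  finally show ?thesis .
qed

lemma sum_load_le_sum_count_if_tight:
  fixes y :: "nat \<Rightarrow> real" and c l :: "nat \<Rightarrow> nat"
  assumes "\<And>t. t < m \<Longrightarrow> real (l t) \<le> y t" "(\<Sum>t<m. y t) \<le> real b"
    and "(\<Sum>t<m. max (c t) (l t)) = b"
  shows "(\<Sum>t | t < m \<and> l t \<le> c t. y t) \<le> (\<Sum>t | t < m \<and> l t \<le> c t. real (c t))"
proof -
  define T where "T = {t. t < m \<and> l t \<le> c t}"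
  have T: "T \<subseteq> {..<m}" unfolding T_def by auto
  have "real b = (\<Sum>t\<in>{..<m} - T. real (max (c t) (l t))) + (\<Sum>t\<in>T. real (max (c t) (l t)))"
    unfolding assms(3)[symmetric] of_nat_sum by (rule sum.subset_diff[OF T]) simp
  also have "\<dots> = (\<Sum>t\<in>{..<m} - T. real (l t)) + (\<Sum>t\<in>T. real (c t))"
    by (intro arg_cong2[where f = "(+)"] sum.cong) (auto simp: T_def)
  finally have "real b = (\<Sum>t\<in>{..<m} - T. real (l t)) + (\<Sum>t\<in>T. real (c t))" .
  moreover have "(\<Sum>t\<in>{..<m} - T. real (l t)) \<le> (\<Sum>t\<in>{..<m} - T. y t)"
    using assms(1) by (intro sum_mono) auto
  moreover have "(\<Sum>t<m. y t) = (\<Sum>t\<in>{..<m} - T. y t) + (\<Sum>t\<in>T. y t)"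
    using sum.subset_diff[OF T] by simp
  ultimately show ?thesis using assms(2) unfolding T_def by linarith
qed

locale partitioned_ground =
  fixes V :: "'a set" and m :: nat and G :: "nat \<Rightarrow> 'a set"
  assumes finite_ground: "finite V"
    and groups_disjoint: "\<And>i j. i < m \<Longrightarrow> j < m \<Longrightarrow> i \<noteq> j \<Longrightarrow> G i \<inter> G j = {}"
    and groups_cover: "(\<Union>t<m. G t) = V"
begin

lemma group_subset_ground: "t < m \<Longrightarrow> G t \<subseteq> V"
  using groups_cover by blast

lemma finite_group: "t < m \<Longrightarrow> finite (G t)"
  using finite_subset[OF group_subset_ground finite_ground] .

lemma obtain_group:
  assumes "u \<in> V"
  obtains t where "t < m" "u \<in> G t"
  using assms groups_cover by blast

lemma group_unique: "s < m \<Longrightarrow> t < m \<Longrightarrow> u \<in> G s \<Longrightarrow> u \<in> G t \<Longrightarrow> s = t"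
  using groups_disjoint by blast

lemma sum_Union_groups:
  "T \<subseteq> {..<m} \<Longrightarrow> (\<Sum>u\<in>(\<Union>t\<in>T. G t). z u) = (\<Sum>t\<in>T. \<Sum>u\<in>G t. z u)"
  by (rule sum.UNION_disjoint) (auto intro: finite_subset finite_group dest: groups_disjoint)

lemma sum_ground_eq_sum_groups: "(\<Sum>u\<in>V. z u) = (\<Sum>t<m. \<Sum>u\<in>G t. z u)"
  using sum_Union_groups[of "{..<m}" z] groups_cover by simp

lemma card_eq_sum_card_inter_groups:
  assumes "H \<subseteq> V"
  shows "card H = (\<Sum>t<m. card (H \<inter> G t))"
proof -
  have "H = (\<Union>t<m. H \<inter> G t)" using assms groups_cover by blast
  also have "card \<dots> = (\<Sum>t<m. card (H \<inter> G t))"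
    by (rule card_UN_disjoint) (use finite_group groups_disjoint in auto)
  finally show ?thesis .
qed

lemma card_insert_inter_group:
  assumes "t < m" "s < m" "u \<in> G t" "u \<notin> H"
  shows "card (insert u H \<inter> G s) = (if s = t then Suc (card (H \<inter> G s)) else card (H \<inter> G s))"
proof (cases "s = t")
  case True
  then have "insert u H \<inter> G s = insert u (H \<inter> G s)" using assms(3) by blast
  then show ?thesis using True assms(2,4) finite_group by simp
next
  case False
  then have "insert u H \<inter> G s = H \<inter> G s" using assms group_unique by blast
  then show ?thesis using False by simp
qed

text \<open>The sets that can be completed to a set with l t \<le> |A \<inter> G t| \<le> h t and |A| \<le> b:
  completion needs max (card (T \<inter> G t)) (l t) elements from group t.\<close>

definition quota_family :: "(nat \<Rightarrow> nat) \<Rightarrow> (nat \<Rightarrow> nat) \<Rightarrow> nat \<Rightarrow> 'a set set" where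
  "quota_family l h b = {T. T \<subseteq> V \<and> (\<forall>t<m. card (T \<inter> G t) \<le> h t) \<and>
     (\<Sum>t<m. max (card (T \<inter> G t)) (l t)) \<le> b}"

lemma quota_family_subset_closed:
  assumes "A \<subseteq> B" "B \<in> quota_family l h b"
  shows "A \<in> quota_family l h b"
proof -
  have le: "card (A \<inter> G t) \<le> card (B \<inter> G t)" if "t < m" for t
    using assms(1) finite_group[OF that] by (intro card_mono) auto
  then have "(\<Sum>t<m. max (card (A \<inter> G t)) (l t)) \<le> (\<Sum>t<m. max (card (B \<inter> G t)) (l t))"
    by (intro sum_mono) (simp add: max.coboundedI1)
  moreover have "card (A \<inter> G t) \<le> h t" if "t < m" for t
    using le[OF that] assms(2) that unfolding quota_family_def by fastforce
  ultimately show ?thesis using assms unfolding quota_family_def by auto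
qed

lemma empty_in_quota_family: "(\<Sum>t<m. l t) \<le> b \<Longrightarrow> {} \<in> quota_family l h b"
  by (simp add: quota_family_def)

lemma quota_family_completion:
  assumes "T \<in> quota_family l h b"
    and "\<And>t. t < m \<Longrightarrow> l t \<le> h t" "\<And>t. t < m \<Longrightarrow> l t \<le> card (G t)"
  obtains A where "T \<subseteq> A" "A \<subseteq> V" "card A \<le> b"
    "\<And>t. t < m \<Longrightarrow> l t \<le> card (A \<inter> G t) \<and> card (A \<inter> G t) \<le> h t"
proof -
  have "\<exists>C. t < m \<longrightarrow> T \<inter> G t \<subseteq> C \<and> C \<subseteq> G t \<and> card C = max (card (T \<inter> G t)) (l t)" for t
  proof (cases "t < m")
    case True
    then have "card (T \<inter> G t) \<le> card (G t)" by (intro card_mono finite_group) auto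
    then show ?thesis
      using exists_subset_between[where A = "T \<inter> G t" and C = "G t"] assms(3) finite_group True by auto
  qed simp
  then obtain C where C: "\<And>t. t < m \<Longrightarrow> T \<inter> G t \<subseteq> C t \<and> C t \<subseteq> G t \<and> card (C t) = max (card (T \<inter> G t)) (l t)"
    by metis
  define A where "A = (\<Union>t<m. C t)"
  have A_group: "A \<inter> G t = C t" if "t < m" for t
    using C that group_unique unfolding A_def by blast
  show ?thesis
  proof
    show "T \<subseteq> A" "A \<subseteq> V"
      using C assms(1) groups_cover unfolding A_def quota_family_def by blast+
    have "card A \<le> (\<Sum>t<m. card (C t))" unfolding A_def by (rule card_UN_le) simp
    also have "\<dots> = (\<Sum>t<m. max (card (T \<inter> G t)) (l t))" using C by simp
    finally show "card A \<le> b" using assms(1) unfolding quota_family_def by simp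
    show "l t \<le> card (A \<inter> G t) \<and> card (A \<inter> G t) \<le> h t" if "t < m" for t
      using A_group[OF that] C[OF that] assms(1) assms(2)[OF that] that unfolding quota_family_def by simp
  qed
qed

lemma blocked_quota_group_saturated:
  assumes "H \<in> quota_family l h b" "u \<in> blocked V (quota_family l h b) H"
    and "t < m" "u \<in> G t" "l t \<le> h t"
  shows "if (\<Sum>s<m. max (card (H \<inter> G s)) (l s)) = b then l t \<le> card (H \<inter> G t)
         else h t \<le> card (H \<inter> G t)"
proof -
  let ?c = "\<lambda>s. card (H \<inter> G s)"
  let ?P = "\<Sum>s<m. max (?c s) (l s)"
  have u: "u \<in> V" "u \<notin> H" "insert u H \<notin> quota_family l h b"
    using assms(2) by (simp_all add: blocked_def)
  have card_insert: "card (insert u H \<inter> G s) = (if s = t then Suc (?c s) else ?c s)" if "s < m" for s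
    by (rule card_insert_inter_group[OF assms(3) that assms(4) u(2)])
  have "(\<Sum>s<m. max (card (insert u H \<inter> G s)) (l s))
      = (\<Sum>s<m. max (?c s) (l s) + (if s = t then (if l t \<le> ?c t then 1 else 0) else 0))"
    by (rule sum.cong) (auto simp: card_insert max_def)
  also have "\<dots> = ?P + (if l t \<le> ?c t then 1 else 0)"
    using assms(3) by (simp add: sum.distrib)
  finally have sum_insert: "(\<Sum>s<m. max (card (insert u H \<inter> G s)) (l s)) = ?P + (if l t \<le> ?c t then 1 else 0)" .
  have H: "H \<subseteq> V" "\<And>s. s < m \<Longrightarrow> ?c s \<le> h s" "?P \<le> b"
    using assms(1) by (auto simp: quota_family_def)
  have "\<not> (\<forall>s<m. card (insert u H \<inter> G s) \<le> h s) \<or> b < ?P + (if l t \<le> ?c t then 1 else 0)"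
    using u H(1) sum_insert unfolding quota_family_def by auto
  then have "h t \<le> ?c t \<or> (?P = b \<and> l t \<le> ?c t)"
    using card_insert H(2,3) by (auto split: if_splits)
  then show ?thesis using assms(5) by auto
qed

text \<open>A blocked element lies in a saturated group: one at its upper quota, or, when the
  budget is exhausted, one at or above its lower quota. The load of saturated groups is at most
  their count in H.\<close>

lemma blocked_weight_le_card:
  fixes z :: "'a \<Rightarrow> real" and l h :: "nat \<Rightarrow> nat"
  assumes z_nonneg: "\<And>u. u \<in> V \<Longrightarrow> 0 \<le> z u"
    and load_bounds: "\<And>t. t < m \<Longrightarrow> real (l t) \<le> (\<Sum>u\<in>G t. z u) \<and> (\<Sum>u\<in>G t. z u) \<le> real (h t)"
    and total_load: "(\<Sum>u\<in>V. z u) \<le> real b"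
    and H: "H \<in> quota_family l h b"
  shows "(\<Sum>u\<in>blocked V (quota_family l h b) H. z u) \<le> real (card H)"
proof -
  let ?c = "\<lambda>s. card (H \<inter> G s)"
  let ?P = "\<Sum>s<m. max (?c s) (l s)"
  define T where "T = {t. t < m \<and> (if ?P = b then l t \<le> ?c t else h t \<le> ?c t)}"
  have T: "T \<subseteq> {..<m}" unfolding T_def by auto
  have cover: "blocked V (quota_family l h b) H \<subseteq> (\<Union>t\<in>T. G t)"
  proof
    fix u assume u: "u \<in> blocked V (quota_family l h b) H"
    then obtain t where "t < m" "u \<in> G t" using obtain_group by (auto simp: blocked_def)
    moreover have "l t \<le> h t" using load_bounds[OF \<open>t < m\<close>] by linarith
    ultimately show "u \<in> (\<Union>t\<in>T. G t)"
      using blocked_quota_group_saturated[OF H u] unfolding T_def by blast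
  qed
  have "(\<Sum>u\<in>blocked V (quota_family l h b) H. z u) \<le> (\<Sum>u\<in>(\<Union>t\<in>T. G t). z u)"
  proof (rule sum_mono2[OF _ cover])
    have "(\<Union>t\<in>T. G t) \<subseteq> V" using T group_subset_ground by blast
    then show "finite (\<Union>t\<in>T. G t)" "\<And>u. u \<in> (\<Union>t\<in>T. G t) - blocked V (quota_family l h b) H \<Longrightarrow> 0 \<le> z u"
      using finite_subset finite_ground z_nonneg by blast+
  qed
  also have "\<dots> = (\<Sum>t\<in>T. \<Sum>u\<in>G t. z u)"
    by (rule sum_Union_groups[OF T])
  also have "\<dots> \<le> (\<Sum>t\<in>T. real (?c t))"
  proof (cases "?P = b")
    case True
    then have "T = {t. t < m \<and> l t \<le> ?c t}" unfolding T_def by simp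
    then show ?thesis
      using sum_load_le_sum_count_if_tight[of m l "\<lambda>t. \<Sum>u\<in>G t. z u" b ?c] load_bounds total_load True
      by (simp add: sum_ground_eq_sum_groups)
  next
    case False
    show ?thesis
    proof (rule sum_mono)
      fix t assume "t \<in> T"
      then have "t < m" "real (h t) \<le> real (?c t)" using False unfolding T_def by auto
      then show "(\<Sum>u\<in>G t. z u) \<le> real (?c t)" using load_bounds by force
    qed
  qed
  also have "\<dots> \<le> real (\<Sum>t<m. ?c t)"
    unfolding of_nat_sum by (intro sum_mono2 T) auto
  also have "\<dots> = real (card H)"
    using card_eq_sum_card_inter_groups H by (simp add: quota_family_def)
  finally show ?thesis .
qed

lemma exists_greedy_completion:
  fixes z :: "'a \<Rightarrow> real" and l h :: "nat \<Rightarrow> nat"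
  assumes mono: "monotone_set_fun V f" and submod: "submodular V f"
    and z_nonneg: "\<And>u. u \<in> V \<Longrightarrow> 0 \<le> z u"
    and load_bounds: "\<And>t. t < m \<Longrightarrow> real (l t) \<le> (\<Sum>u\<in>G t. z u) \<and> (\<Sum>u\<in>G t. z u) \<le> real (h t)"
    and total_load: "(\<Sum>u\<in>V. z u) \<le> real b"
    and group_large: "\<And>t. t < m \<Longrightarrow> l t \<le> card (G t)"
  obtains S A where "S \<subseteq> A" "A \<subseteq> V" "card A \<le> b"
    "\<And>t. t < m \<Longrightarrow> l t \<le> card (A \<inter> G t) \<and> card (A \<inter> G t) \<le> h t"
    "(\<Sum>u\<in>V - S. z u * (f (insert u S) - f S)) \<le> f S - f {}"
proof -
  let ?M = "quota_family l h b"
  have "(\<Sum>t<m. real (l t)) \<le> (\<Sum>t<m. \<Sum>u\<in>G t. z u)"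
    using load_bounds by (intro sum_mono) auto
  then have "real (\<Sum>t<m. l t) \<le> real b"
    using total_load unfolding sum_ground_eq_sum_groups of_nat_sum by linarith
  then have "{} \<in> ?M" by (intro empty_in_quota_family) (simp only: of_nat_le_iff)
  then obtain vs where "greedy_list V ?M f vs" "set vs \<in> ?M" "\<forall>u\<in>V - set vs. insert u (set vs) \<notin> ?M"
    using maximal_greedy_list_exists finite_ground by blast
  then interpret greedy_run V ?M f vs
    using \<open>{} \<in> ?M\<close> quota_family_subset_closed mono submod finite_ground by unfold_locales blast+
  have "l t \<le> h t" if "t < m" for t using load_bounds[OF that] by linarith
  then obtain A where "set vs \<subseteq> A" "A \<subseteq> V" "card A \<le> b"
    "\<And>t. t < m \<Longrightarrow> l t \<le> card (A \<inter> G t) \<and> card (A \<inter> G t) \<le> h t"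
    using quota_family_completion[OF \<open>set vs \<in> ?M\<close>] group_large by blast
  moreover have "(\<Sum>u\<in>V - set vs. z u * (f (insert u (set vs)) - f (set vs))) \<le> f (set vs) - f {}"
    using sum_weighted_marginals_le blocked_weight_le_card[OF z_nonneg load_bounds total_load] z_nonneg
    by blast
  ultimately show ?thesis using that by blast
qed

lemma coverage_of_P0_feasible:
  assumes "P0_feasible V m G \<alpha> \<beta> b x"
  defines "z \<equiv> coverage (fam V b) x"
  shows "\<And>u. 0 \<le> z u"
    and "\<And>t. t < m \<Longrightarrow> \<alpha> t \<le> (\<Sum>u\<in>G t. z u) \<and> (\<Sum>u\<in>G t. z u) \<le> \<beta> t"
    and "\<And>t. t < m \<Longrightarrow> (\<Sum>u\<in>G t. z u) \<le> real (card (G t))"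
    and "(\<Sum>u\<in>V. z u) \<le> real b"
proof -
  have x: "\<And>S. S \<in> fam V b \<Longrightarrow> 0 \<le> x S" "sum x (fam V b) \<le> 1"
    using assms(1) unfolding P0_feasible_def by auto
  show "0 \<le> z u" for u
    unfolding z_def using x(1) by (rule coverage_nonneg)
  show "\<alpha> t \<le> (\<Sum>u\<in>G t. z u) \<and> (\<Sum>u\<in>G t. z u) \<le> \<beta> t" if "t < m" for t
    using assms(1) that finite_group unfolding P0_feasible_def z_def by (simp add: sum_coverage)
  show "(\<Sum>u\<in>G t. z u) \<le> real (card (G t))" if "t < m" for t
  proof -
    have "(\<Sum>u\<in>G t. z u) \<le> (\<Sum>u\<in>G t. 1)"
      unfolding z_def using coverage_le_sum[of "fam V b" x, OF x(1)] x(2) by (intro sum_mono) (meson order.trans)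
    then show ?thesis by simp
  qed
  have "(\<Sum>u\<in>V. z u) = (\<Sum>S\<in>fam V b. x S * real (card S))"
    unfolding z_def sum_coverage[OF finite_ground] by (rule sum.cong) (auto simp: fam_def Int_absorb2)
  also have "\<dots> \<le> (\<Sum>S\<in>fam V b. x S * real b)"
    using x(1) by (intro sum_mono mult_left_mono) (auto simp: fam_def)
  also have "\<dots> \<le> real b"
    using x by (simp flip: sum_distrib_right add: mult_left_le_one_le sum_nonneg)
  finally show "(\<Sum>u\<in>V. z u) \<le> real b" .
qed

lemma P0_feasible_greedy_completion:
  assumes mono: "monotone_set_fun V f" and submod: "submodular V f"
    and x: "P0_feasible V m G \<alpha> \<beta> b x"
    and nonneg: "\<And>t. t < m \<Longrightarrow> 0 \<le> \<alpha> t \<and> 0 \<le> \<beta> t"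
  obtains S A where "S \<subseteq> A" "P2_feasible V m G \<alpha> \<beta> b A"
    "(\<Sum>u\<in>V - S. coverage (fam V b) x u * (f (insert u S) - f S)) \<le> f S - f {}"
proof -
  let ?z = "coverage (fam V b) x"
  define l where "l t = nat \<lfloor>\<alpha> t\<rfloor>" for t
  define h where "h t = nat \<lceil>\<beta> t\<rceil>" for t
  have l_h: "int (l t) = \<lfloor>\<alpha> t\<rfloor>" "int (h t) = \<lceil>\<beta> t\<rceil>" "real (l t) \<le> \<alpha> t" "\<beta> t \<le> real (h t)"
    if "t < m" for t
    using nonneg[OF that] unfolding l_def h_def by (simp_all add: of_nat_nat le_of_int_ceiling)
  have loads: "real (l t) \<le> (\<Sum>u\<in>G t. ?z u) \<and> (\<Sum>u\<in>G t. ?z u) \<le> real (h t)" if "t < m" for t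
    using coverage_of_P0_feasible(2)[OF x that] l_h[OF that] by linarith
  have "real (l t) \<le> real (card (G t))" if "t < m" for t
    using loads[OF that] coverage_of_P0_feasible(3)[OF x that] by linarith
  then have "l t \<le> card (G t)" if "t < m" for t
    using that by simp
  then obtain S A where "S \<subseteq> A" "A \<subseteq> V" "card A \<le> b"
    and A_groups: "\<And>t. t < m \<Longrightarrow> l t \<le> card (A \<inter> G t) \<and> card (A \<inter> G t) \<le> h t"
    and "(\<Sum>u\<in>V - S. ?z u * (f (insert u S) - f S)) \<le> f S - f {}"
    using exists_greedy_completion[OF mono submod coverage_of_P0_feasible(1)[OF x] loads
        coverage_of_P0_feasible(4)[OF x]] by blast
  moreover have "P2_feasible V m G \<alpha> \<beta> b A"
    unfolding P2_feasible_def fam_def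
    using \<open>A \<subseteq> V\<close> \<open>card A \<le> b\<close> A_groups by (simp flip: l_h(1,2))
  ultimately show ?thesis using that by blast
qed

end

lemma P0_value_le_twice:
  assumes mono: "monotone_set_fun V f" and submod: "submodular V f"
    and "finite V" "\<And>S. S \<subseteq> V \<Longrightarrow> 0 \<le> f S" "S \<subseteq> V"
    and x_nonneg: "\<And>T. T \<in> fam V b \<Longrightarrow> 0 \<le> x T" and x_sum: "sum x (fam V b) \<le> 1"
    and marginals: "(\<Sum>u\<in>V - S. coverage (fam V b) x u * (f (insert u S) - f S)) \<le> f S - f {}"
  shows "P0_value V b f x \<le> 2 * f S"
proof -
  have "P0_value V b f x \<le> sum x (fam V b) * f S + (\<Sum>u\<in>V - S. coverage (fam V b) x u * (f (insert u S) - f S))"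
    unfolding P0_value_def
    by (rule sum_mult_le_add_coverage_marginals[OF mono submod \<open>finite V\<close> _ x_nonneg \<open>S \<subseteq> V\<close>])
      (auto simp: fam_def)
  moreover have "sum x (fam V b) * f S \<le> f S"
    using x_sum assms(4,5) x_nonneg by (intro mult_left_le_one_le sum_nonneg) auto
  moreover have "0 \<le> f {}" using assms(4) by blast
  ultimately show ?thesis using marginals by linarith
qed

lemma one_minus_inverse_exp_squared_le_half: "(1 - 1 / exp 1) ^ 2 \<le> (1 / 2 :: real)"
proof -
  have "1 / 3 \<le> 1 / exp (1::real)" "1 / exp (1::real) \<le> 1"
    using exp_le by (auto simp: frac_le)
  then have "(1 - 1 / exp (1::real)) ^ 2 \<le> (2 / 3) ^ 2"
    by (intro power_mono) auto
  also have "\<dots> \<le> 1 / 2" by (simp add: power2_eq_square)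
  finally show ?thesis .
qed

theorem lemma3:
  fixes V :: "'a set" and f :: "'a set \<Rightarrow> real" and m :: nat and G :: "nat \<Rightarrow> 'a set"
    and \<alpha> \<beta> :: "nat \<Rightarrow> real" and b :: nat and x :: "'a set \<Rightarrow> real" and OPT :: real
  assumes finV: "finite V"
    and f_nonneg: "\<forall>S. S \<subseteq> V \<longrightarrow> 0 \<le> f S"
    and f_mono: "monotone_set_fun V f"
    and f_submod: "submodular V f"
    and groups_disj: "\<forall>i<m. \<forall>j<m. i \<noteq> j \<longrightarrow> G i \<inter> G j = {}"
    and groups_cover: "(\<Union>t<m. G t) = V"
    and alpha_nonneg: "\<forall>t<m. 0 \<le> \<alpha> t"
    and beta_nonneg: "\<forall>t<m. 0 \<le> \<beta> t"
    and b_pos: "0 < b"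
    and x_opt: "P0_optimal V m G \<alpha> \<beta> b f x"
    and OPT_def: "OPT = P0_value V b f x"
  shows "(\<exists>S. P2_feasible V m G \<alpha> \<beta> b S)
       \<and> (\<forall>A. P2_optimal V m G \<alpha> \<beta> b f A \<longrightarrow> f A \<ge> (1 - 1 / exp 1)^2 * OPT)
       \<and> (\<exists>A. A \<subseteq> V \<and> card A \<le> b
              \<and> (\<forall>t<m. \<lfloor>\<alpha> t\<rfloor> \<le> int (card (A \<inter> G t)) \<and> int (card (A \<inter> G t)) \<le> \<lceil>\<beta> t\<rceil>)
              \<and> f A \<ge> (1 - 1 / exp 1)^2 * OPT)"
proof -
  interpret partitioned_ground V m G
    using finV groups_disj groups_cover by unfold_locales auto
  have x: "P0_feasible V m G \<alpha> \<beta> b x"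
    using x_opt unfolding P0_optimal_def by simp
  then have x_nonneg: "\<And>S. S \<in> fam V b \<Longrightarrow> 0 \<le> x S" and "sum x (fam V b) \<le> 1"
    unfolding P0_feasible_def by auto
  obtain S A where "S \<subseteq> A" and A_feasible: "P2_feasible V m G \<alpha> \<beta> b A"
    and marginals: "(\<Sum>u\<in>V - S. coverage (fam V b) x u * (f (insert u S) - f S)) \<le> f S - f {}"
    using P0_feasible_greedy_completion[OF f_mono f_submod x] alpha_nonneg beta_nonneg by blast
  have "A \<subseteq> V" using A_feasible by (simp add: P2_feasible_def fam_def)
  then have "OPT \<le> 2 * f S"
    unfolding OPT_def using \<open>S \<subseteq> A\<close> f_nonneg x_nonneg \<open>sum x (fam V b) \<le> 1\<close> marginals
    by (intro P0_value_le_twice[OF f_mono f_submod finV]) auto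
  moreover have "0 \<le> OPT"
    unfolding OPT_def P0_value_def using x_nonneg f_nonneg by (auto simp: fam_def intro: sum_nonneg)
  moreover have "f S \<le> f A"
    using monotone_set_funD[OF f_mono \<open>S \<subseteq> A\<close> \<open>A \<subseteq> V\<close>] .
  ultimately have bound: "(1 - 1 / exp 1)^2 * OPT \<le> f A"
    using mult_right_mono[OF one_minus_inverse_exp_squared_le_half, of OPT] by linarith
  then have "(1 - 1 / exp 1)^2 * OPT \<le> f A'" if "P2_optimal V m G \<alpha> \<beta> b f A'" for A'
    using that A_feasible unfolding P2_optimal_def by fastforce
  then show ?thesis
    using A_feasible bound unfolding P2_feasible_def fam_def by blast
qed

end
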